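(* Let $G$ be an $n$-vertex connected graph with chromatic number $\chi \geq 2$, and suppose that $\chi$ divides $n$. Then \[ {\rm ABC}(G) \leq n \sqrt{\frac{\chi(n-1)-n}{2\chi}}, \] with equality if and only if $G \cong T_{n,\chi}$.
   Context: All graphs are simple and undirected. For a graph $G$ and a vertex $v$, $d(v)$ denotes the degree of $v$. The atom-bond connectivity (ABC) index is ${\rm ABC}(G)=\sum_{uv\in E(G)} \sqrt{\frac{d(u)+d(v)-2}{d(u)d(v)}}$. $T_{n,l}$ denotes the complete $l$-partite graph on $n$ vertices whose part sizes $t_1,\dots,t_l$ satisfy $|t_i - t_j| \leq 1$ for all $i,j$. *)

theory Defs
  imports Complex_Main
begin

definition simple_graph :: "'a set \<Rightarrow> 'a set set \<Rightarrow> bool" where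
  "simple_graph V E \<longleftrightarrow> finite V \<and> (\<forall>e\<in>E. e \<subseteq> V \<and> card e = 2)"

definition degree :: "'a set \<Rightarrow> 'a set set \<Rightarrow> 'a \<Rightarrow> nat" where
  "degree V E v = card {u \<in> V. {u, v} \<in> E}"

definition graph_connected :: "'a set \<Rightarrow> 'a set set \<Rightarrow> bool" where
  "graph_connected V E \<longleftrightarrow> V \<noteq> {} \<and>
     (\<forall>u\<in>V. \<forall>v\<in>V. (u, v) \<in> {(x, y). {x, y} \<in> E}\<^sup>*)"

definition proper_coloring :: "'a set \<Rightarrow> 'a set set \<Rightarrow> nat \<Rightarrow> ('a \<Rightarrow> nat) \<Rightarrow> bool" where
  "proper_coloring V E k c \<longleftrightarrow> (\<forall>v\<in>V. c v < k) \<and>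
     (\<forall>u\<in>V. \<forall>v\<in>V. {u, v} \<in> E \<longrightarrow> c u \<noteq> c v)"

definition chromatic_number :: "'a set \<Rightarrow> 'a set set \<Rightarrow> nat" where
  "chromatic_number V E = (LEAST k. \<exists>c. proper_coloring V E k c)"

definition ABC :: "'a set \<Rightarrow> 'a set set \<Rightarrow> real" where
  "ABC V E = (\<Sum>e\<in>E. sqrt (((\<Sum>v\<in>e. real (degree V E v)) - 2)
                            / (\<Prod>v\<in>e. real (degree V E v))))"

definition graph_iso :: "'a set \<Rightarrow> 'a set set \<Rightarrow> 'b set \<Rightarrow> 'b set set \<Rightarrow> bool" where
  "graph_iso V E W F \<longleftrightarrow> (\<exists>f. bij_betw f V W \<and>
     (\<forall>u\<in>V. \<forall>v\<in>V. {u, v} \<in> E \<longleftrightarrow> {f u, f v} \<in> F))"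

text \<open>Turan graph T_{n,l}: vertices 0..n-1, parts are the residue classes mod l
  (complete l-partite, part sizes differ by at most 1).\<close>
definition turan_vertices :: "nat \<Rightarrow> nat set" where
  "turan_vertices n = {0..<n}"

definition turan_edges :: "nat \<Rightarrow> nat \<Rightarrow> nat set set" where
  "turan_edges n l = {{i, j} | i j. i < n \<and> j < n \<and> i mod l \<noteq> j mod l}"

end

theory Submission
  imports Defs "HOL-Analysis.Convex"
begin

text \<open>Each summand of the ABC index is \<open>sqrt (1/d u + 1/d v) * sqrt (1 - 2/(d u + d v))\<close>, and the
  first factors square-sum to \<open>n\<close> over the edges, so by Cauchy--Schwarz
  \<open>ABC\<^sup>2 \<le> n * (\<Sum>uv. 1 - 2/(d u + d v))\<close>. Let \<open>D = n - n/\<chi>\<close> be the degree of \<open>T\<^sub>n\<^sub>,\<^sub>\<chi>\<close>. The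
  tangent of \<open>s \<mapsto> 1 - 2/s\<close> at \<open>s = 2 D\<close> bounds the edge sum by a sum of increasing vertex
  weights \<open>q (d v)\<close>. In a \<open>\<chi>\<close>-coloring a vertex of a class of size \<open>t\<close> has degree at most
  \<open>n - t\<close>, and the tangent of \<open>t \<mapsto> t * q (n - t)\<close> at \<open>t = n/\<chi>\<close> bounds the resulting sum over
  the classes by \<open>n (D - 1) / 2\<close>. Equality forces all classes to have size \<open>n/\<chi>\<close> and all
  vertices of different classes to be adjacent, i.e. \<open>G \<cong> T\<^sub>n\<^sub>,\<^sub>\<chi>\<close>; conversely this graph is
  \<open>D\<close>-regular, where the bound is attained.\<close>

lemma simple_graph_finite_edges:
  assumes "simple_graph V E"
  shows "finite E"
proof -
  have "E \<subseteq> Pow V"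
    using assms by (auto simp: simple_graph_def)
  then show ?thesis
    using assms by (auto simp: simple_graph_def intro: finite_subset)
qed

lemma simple_graph_edgeE:
  assumes "simple_graph V E" "e \<in> E"
  obtains u v where "u \<noteq> v" "u \<in> V" "v \<in> V" "e = {u, v}"
  using assms by (auto simp: simple_graph_def card_2_iff)

lemma simple_graph_adjD:
  assumes "simple_graph V E" "{u, v} \<in> E"
  shows "u \<noteq> v" "u \<in> V" "v \<in> V"
  using assms by (fastforce simp: simple_graph_def)+

lemma card_incident_edges:
  assumes "simple_graph V E" "v \<in> V"
  shows "card {e \<in> E. v \<in> e} = degree V E v"
proof -
  have "bij_betw (\<lambda>u. {u, v}) {u \<in> V. {u, v} \<in> E} {e \<in> E. v \<in> e}"
  proof (rule bij_betwI')
    fix e assume e: "e \<in> {e \<in> E. v \<in> e}"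
    then obtain a b where "e = {a, b}" "a \<in> V" "b \<in> V"
      using simple_graph_edgeE[OF assms(1)] by blast
    with e show "\<exists>u \<in> {u \<in> V. {u, v} \<in> E}. e = {u, v}"
      by (auto simp: insert_commute)
  qed (auto simp: doubleton_eq_iff)
  then show ?thesis
    unfolding degree_def by (simp add: bij_betw_same_card)
qed

lemma handshake:
  fixes \<phi> :: "'a \<Rightarrow> 'b::comm_semiring_1"
  assumes "simple_graph V E"
  shows "(\<Sum>e\<in>E. \<Sum>v\<in>e. \<phi> v) = (\<Sum>v\<in>V. of_nat (degree V E v) * \<phi> v)"
proof -
  have fin: "finite V" "finite E"
    using assms simple_graph_finite_edges by (auto simp: simple_graph_def)
  have "(\<Sum>e\<in>E. \<Sum>v\<in>e. \<phi> v) = (\<Sum>e\<in>E. \<Sum>v\<in>{v \<in> V. v \<in> e}. \<phi> v)"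
    using assms by (intro sum.cong) (auto simp: simple_graph_def intro!: arg_cong2[where f = sum])
  also have "\<dots> = (\<Sum>v\<in>V. \<Sum>e\<in>{e \<in> E. v \<in> e}. \<phi> v)"
    using sum.swap_restrict[OF fin(2,1), of "\<lambda>e v. \<phi> v" "\<lambda>e v. v \<in> e"] by simp
  also have "\<dots> = (\<Sum>v\<in>V. of_nat (degree V E v) * \<phi> v)"
    using assms by (intro sum.cong) (simp_all add: card_incident_edges)
  finally show ?thesis .
qed

lemma degree_ge_1_if_connected:
  assumes "simple_graph V E" "graph_connected V E" "2 \<le> card V" "v \<in> V"
  shows "1 \<le> degree V E v"
proof -
  have "\<not> V \<subseteq> {v}"
    using assms(3) card_mono[of "{v}" V] by auto
  then obtain u where u: "u \<in> V" "u \<noteq> v"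
    by blast
  have "(v, u) \<in> {(x, y). {x, y} \<in> E}\<^sup>*"
    using assms(2,4) u(1) by (simp add: graph_connected_def)
  then obtain w where "(v, w) \<in> {(x, y). {x, y} \<in> E}"
    using u(2) converse_rtranclE by metis
  then have "w \<in> {u \<in> V. {u, v} \<in> E}"
    using simple_graph_adjD[OF assms(1)] by (auto simp: insert_commute)
  moreover have "finite V"
    using assms(1) by (simp add: simple_graph_def)
  ultimately show ?thesis
    unfolding degree_def by (auto simp: Suc_le_eq card_gt_0_iff)
qed

lemma proper_coloring_card_exists:
  assumes "simple_graph V E"
  shows "\<exists>c. proper_coloring V E (card V) c"
proof -
  obtain h where h: "bij_betw h V {0..<card V}"
    using assms ex_bij_betw_finite_nat[of V] by (auto simp: simple_graph_def)
  have "h u \<noteq> h v" if "{u, v} \<in> E" for u v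
    using simple_graph_adjD[OF assms that] h by (auto simp: bij_betw_def inj_on_def)
  then have "proper_coloring V E (card V) h"
    using h by (auto simp: proper_coloring_def bij_betw_def)
  then show ?thesis
    by blast
qed

lemma chromatic_number_le_card:
  assumes "simple_graph V E"
  shows "chromatic_number V E \<le> card V"
  unfolding chromatic_number_def using proper_coloring_card_exists[OF assms] by (rule Least_le)

lemma proper_coloring_chromatic_number:
  assumes "simple_graph V E"
  obtains c where "proper_coloring V E (chromatic_number V E) c"
proof -
  have "\<exists>k c. proper_coloring V E k c"
    using proper_coloring_card_exists[OF assms] by blast
  then have "\<exists>c. proper_coloring V E (chromatic_number V E) c"
    unfolding chromatic_number_def by (rule LeastI_ex)
  then show ?thesis
    using that by blast
qed

lemma sum_by_color_class:
  fixes g :: "nat \<Rightarrow> 'b::comm_semiring_1"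
  assumes "finite V" "c ` V \<subseteq> {..<k}"
  shows "(\<Sum>v\<in>V. g (c v)) = (\<Sum>i<k. of_nat (card {v \<in> V. c v = i}) * g i)"
proof -
  have "(\<Sum>v\<in>V. g (c v)) = (\<Sum>i<k. \<Sum>v\<in>{v \<in> V. c v = i}. g (c v))"
    using sum.group[OF assms(1) finite_lessThan assms(2), of "\<lambda>v. g (c v)"] by simp
  also have "\<dots> = (\<Sum>i<k. of_nat (card {v \<in> V. c v = i}) * g i)"
    by (intro sum.cong) auto
  finally show ?thesis .
qed

lemma degree_le_card_other_colors:
  assumes "finite V" "proper_coloring V E k c" "v \<in> V"
  shows "degree V E v \<le> card V - card {u \<in> V. c u = c v}"
    and "degree V E v = card V - card {u \<in> V. c u = c v} \<Longrightarrow> u \<in> V \<Longrightarrow> {u, v} \<in> E \<longleftrightarrow> c u \<noteq> c v"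
proof -
  have nbrs: "{u \<in> V. {u, v} \<in> E} \<subseteq> V - {u \<in> V. c u = c v}"
    using assms(2,3) by (auto simp: proper_coloring_def)
  have card_other: "card (V - {u \<in> V. c u = c v}) = card V - card {u \<in> V. c u = c v}"
    using assms(1) by (intro card_Diff_subset) auto
  show "degree V E v \<le> card V - card {u \<in> V. c u = c v}"
    unfolding degree_def card_other[symmetric] using assms(1) nbrs by (intro card_mono) auto
  assume "degree V E v = card V - card {u \<in> V. c u = c v}" "u \<in> V"
  moreover from this have "{u \<in> V. {u, v} \<in> E} = V - {u \<in> V. c u = c v}"
    using assms(1) nbrs card_other by (intro card_subset_eq) (auto simp: degree_def)
  ultimately show "{u, v} \<in> E \<longleftrightarrow> c u \<noteq> c v"
    by blast
qed

text \<open>The tangent of the concave function \<open>s \<mapsto> 1 - 2 / s\<close> at \<open>s = 2 D\<close> splits as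
  \<open>1 - 2 / (a + b) \<le> abc_weight D a / a + abc_weight D b / b\<close>, so that summing over the edges
  every vertex \<open>v\<close> contributes \<open>abc_weight D (d v)\<close>.\<close>

definition abc_weight :: "real \<Rightarrow> real \<Rightarrow> real" where
  "abc_weight D d = d * (D * (D - 2) + d) / (2 * D\<^sup>2)"

lemma one_minus_two_div_le_tangent:
  fixes s D :: real
  assumes "0 < s" "0 < D"
  shows "1 - 2 / s \<le> 1 - 2 / D + s / (2 * D\<^sup>2)"
proof -
  have "(1 - 2 / D + s / (2 * D\<^sup>2)) - (1 - 2 / s) = (s - 2 * D)\<^sup>2 / (2 * D\<^sup>2 * s)"
    using assms by (simp add: field_simps power2_eq_square)
  moreover have "0 \<le> (s - 2 * D)\<^sup>2 / (2 * D\<^sup>2 * s)"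
    using assms by simp
  ultimately show ?thesis
    by linarith
qed

lemma ABC_sq_le_sum_abc_weight:
  assumes "simple_graph V E" "\<forall>v\<in>V. 1 \<le> degree V E v" "0 < D"
  shows "(ABC V E)\<^sup>2 \<le> card V * (\<Sum>v\<in>V. abc_weight D (degree V E v))"
proof -
  define d where "d v = real (degree V E v)" for v
  define w where "w e = (\<Sum>v\<in>e. 1 / d v)" for e
  define z where "z e = 1 - 2 / (\<Sum>v\<in>e. d v)" for e
  have edge: "sqrt (((\<Sum>v\<in>e. d v) - 2) / (\<Prod>v\<in>e. d v)) = sqrt (w e) * sqrt (z e)
      \<and> 0 \<le> w e \<and> 0 \<le> z e \<and> z e \<le> (\<Sum>v\<in>e. abc_weight D (d v) / d v)" if e: "e \<in> E" for e
  proof -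
    obtain a b where ab: "a \<noteq> b" "a \<in> V" "b \<in> V" "e = {a, b}"
      using simple_graph_edgeE[OF assms(1) e] by metis
    have pos: "1 \<le> d a" "1 \<le> d b"
      using assms(2) ab by (auto simp: d_def)
    then have nz: "d a \<noteq> 0" "d b \<noteq> 0" "d a + d b \<noteq> 0"
      by linarith+
    have sums: "(\<Sum>v\<in>e. d v) = d a + d b" "(\<Prod>v\<in>e. d v) = d a * d b"
        "w e = 1 / d a + 1 / d b" "z e = 1 - 2 / (d a + d b)"
        "(\<Sum>v\<in>e. abc_weight D (d v) / d v) = abc_weight D (d a) / d a + abc_weight D (d b) / d b"
      using ab by (simp_all add: w_def z_def)
    have "w e * z e = (d a + d b) / (d a * d b) * ((d a + d b - 2) / (d a + d b))"
      using nz by (simp add: sums field_simps)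
    then have "(d a + d b - 2) / (d a * d b) = w e * z e"
      using nz by simp
    moreover have "abc_weight D (d a) / d a + abc_weight D (d b) / d b
        = 1 - 2 / D + (d a + d b) / (2 * D\<^sup>2)"
      using nz assms(3) by (simp add: abc_weight_def field_simps power2_eq_square)
    moreover have "0 \<le> w e" "0 \<le> z e"
      using pos by (simp_all add: sums)
    ultimately show ?thesis
      using one_minus_two_div_le_tangent[of "d a + d b" D] assms(3) pos
      by (simp add: sums real_sqrt_mult)
  qed
  have ABC_eq: "ABC V E = (\<Sum>e\<in>E. sqrt (w e) * sqrt (z e))"
    unfolding ABC_def d_def[symmetric] using edge by (intro sum.cong) auto
  have "(\<Sum>e\<in>E. w e) = (\<Sum>v\<in>V. d v * (1 / d v))"
    unfolding w_def d_def by (rule handshake[OF assms(1)])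
  also have "\<dots> = (\<Sum>v\<in>V. 1)"
    using assms(2) by (intro sum.cong) (auto simp: d_def)
  also have "\<dots> = card V"
    by simp
  finally have sum_w: "(\<Sum>e\<in>E. w e) = card V" .
  have "(\<Sum>e\<in>E. z e) \<le> (\<Sum>e\<in>E. \<Sum>v\<in>e. abc_weight D (d v) / d v)"
    using edge by (intro sum_mono) auto
  also have "\<dots> = (\<Sum>v\<in>V. d v * (abc_weight D (d v) / d v))"
    unfolding d_def by (rule handshake[OF assms(1)])
  also have "\<dots> = (\<Sum>v\<in>V. abc_weight D (d v))"
    by (intro sum.cong) (auto simp: abc_weight_def)
  finally have sum_z: "(\<Sum>e\<in>E. z e) \<le> (\<Sum>v\<in>V. abc_weight D (d v))" .
  have "(ABC V E)\<^sup>2 \<le> (\<Sum>e\<in>E. (sqrt (w e))\<^sup>2) * (\<Sum>e\<in>E. (sqrt (z e))\<^sup>2)"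
    unfolding ABC_eq by (rule Cauchy_Schwarz_ineq_sum)
  also have "\<dots> = card V * (\<Sum>e\<in>E. z e)"
    using edge sum_w by (simp cong: sum.cong)
  also have "\<dots> \<le> card V * (\<Sum>v\<in>V. abc_weight D (degree V E v))"
    using sum_z by (intro mult_left_mono) (auto simp: d_def)
  finally show "(ABC V E)\<^sup>2 \<le> card V * (\<Sum>v\<in>V. abc_weight D (degree V E v))" .
qed

lemma abc_weight_strict_mono:
  assumes "1 \<le> D"
  shows "strict_mono_on {1..} (abc_weight D)"
proof (rule strict_mono_onI)
  fix a b :: real
  assume "a \<in> {1..}" "b \<in> {1..}" "a < b"
  then have ab: "1 \<le> a" "a < b"
    by auto
  have "0 < (D - 1)\<^sup>2 - 1 + a + b"
    using zero_le_power2[of "D - 1"] ab by linarith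
  then have "0 < (b - a) * ((D - 1)\<^sup>2 - 1 + a + b) / (2 * D\<^sup>2)"
    using ab assms by simp
  moreover have "abc_weight D b - abc_weight D a = (b - a) * ((D - 1)\<^sup>2 - 1 + a + b) / (2 * D\<^sup>2)"
    using assms by (simp add: abc_weight_def field_simps power2_eq_square)
  ultimately show "abc_weight D a < abc_weight D b"
    by linarith
qed

lemma sum_abc_weight_complement_le:
  fixes t :: "'i \<Rightarrow> real" and D M :: real
  assumes "finite I" "1 \<le> D" "M \<le> D"
    and sum_t: "(\<Sum>i\<in>I. t i) = card I * M"
    and t_le: "\<And>i. i \<in> I \<Longrightarrow> t i \<le> D + M - 1"
  shows "(\<Sum>i\<in>I. t i * abc_weight D (D + M - t i)) \<le> card I * M * (D - 1) / 2"
    and "(\<Sum>i\<in>I. t i * abc_weight D (D + M - t i)) = card I * M * (D - 1) / 2 \<Longrightarrow> i \<in> I \<Longrightarrow> t i = M"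
proof -
  have D2: "2 * D\<^sup>2 \<noteq> 0"
    using assms(2) by simp
  have w: "2 * D\<^sup>2 * abc_weight D y = y * (D * (D - 2) + y)" for y
    using D2 by (simp add: abc_weight_def)
  text \<open>\<open>line\<close> is the tangent of \<open>x \<mapsto> x * abc_weight D (D + M - x)\<close> at \<open>x = M\<close>.\<close>
  define L where "L = (3 * M\<^sup>2 - 2 * (2 * (D + M) + D\<^sup>2 - 2 * D) * M
      + (D + M) * (D + M + D\<^sup>2 - 2 * D)) / (2 * D\<^sup>2)"
  define line where "line x = M * abc_weight D D + L * (x - M)" for x
  have gap: "line x - x * abc_weight D (D + M - x) = (x - M)\<^sup>2 * (D\<^sup>2 - x) / (2 * D\<^sup>2)" for x
  proof -
    have l: "2 * D\<^sup>2 * L = 3 * M\<^sup>2 - 2 * (2 * (D + M) + D\<^sup>2 - 2 * D) * M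
        + (D + M) * (D + M + D\<^sup>2 - 2 * D)"
      using D2 by (simp add: L_def)
    have "2 * D\<^sup>2 * (line x - x * abc_weight D (D + M - x))
        = M * (2 * D\<^sup>2 * abc_weight D D) + (2 * D\<^sup>2 * L) * (x - M)
          - x * (2 * D\<^sup>2 * abc_weight D (D + M - x))"
      by (simp add: line_def algebra_simps)
    also have "\<dots> = (x - M)\<^sup>2 * (D\<^sup>2 - x)"
      unfolding w l by (simp add: power2_eq_square algebra_simps)
    finally show ?thesis
      using D2 by (simp add: field_simps)
  qed
  have split: "D\<^sup>2 - x = (D - 1)\<^sup>2 + (D - M) + (D + M - 1 - x)" for x
    by (simp add: power2_eq_square algebra_simps)
  have below: "t i * abc_weight D (D + M - t i) \<le> line (t i)" if "i \<in> I" for i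
  proof -
    have "0 \<le> D\<^sup>2 - t i"
      using split[of "t i"] t_le[OF that] assms(3) zero_le_power2[of "D - 1"] by linarith
    then have "0 \<le> (t i - M)\<^sup>2 * (D\<^sup>2 - t i) / (2 * D\<^sup>2)"
      by simp
    then show ?thesis
      using gap[of "t i"] by linarith
  qed
  have "2 * D\<^sup>2 * abc_weight D D = 2 * D\<^sup>2 * ((D - 1) / 2)"
    unfolding w by (simp add: power2_eq_square algebra_simps)
  then have "abc_weight D D = (D - 1) / 2"
    using D2 by simp
  then have sum_line: "(\<Sum>i\<in>I. line (t i)) = card I * M * (D - 1) / 2"
    using sum_t by (simp add: line_def sum.distrib sum_subtractf flip: sum_distrib_left)
  show "(\<Sum>i\<in>I. t i * abc_weight D (D + M - t i)) \<le> card I * M * (D - 1) / 2"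
    unfolding sum_line[symmetric] using below by (rule sum_mono)
  assume "(\<Sum>i\<in>I. t i * abc_weight D (D + M - t i)) = card I * M * (D - 1) / 2" and i: "i \<in> I"
  then have "(\<Sum>i\<in>I. t i * abc_weight D (D + M - t i)) = (\<Sum>i\<in>I. line (t i))"
    using sum_line by simp
  then have "t i * abc_weight D (D + M - t i) = line (t i)"
    by (rule sum_mono_inv[OF _ below i assms(1)])
  then have "(t i - M)\<^sup>2 = 0 \<or> D\<^sup>2 - t i = 0"
    using gap[of "t i"] D2 by simp
  then show "t i = M"
  proof
    assume "D\<^sup>2 - t i = 0"
    then have "(D - 1)\<^sup>2 = 0" "D = M" "t i = D + M - 1"
      using split[of "t i"] t_le[OF i] assms(3) zero_le_power2[of "D - 1"] by linarith+
    then show "t i = M"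
      by simp
  qed simp
qed

lemma sum_abc_weight_degree_le_color_classes:
  assumes "simple_graph V E" "proper_coloring V E k c" "1 \<le> D"
    and deg: "\<forall>v\<in>V. 1 \<le> degree V E v"
  defines "t \<equiv> \<lambda>i. card {v \<in> V. c v = i}"
  shows "(\<Sum>v\<in>V. abc_weight D (degree V E v)) \<le> (\<Sum>i<k. t i * abc_weight D (card V - real (t i)))"
    and "(\<Sum>v\<in>V. abc_weight D (degree V E v)) = (\<Sum>i<k. t i * abc_weight D (card V - real (t i)))
      \<Longrightarrow> u \<in> V \<Longrightarrow> v \<in> V \<Longrightarrow> {u, v} \<in> E \<longleftrightarrow> c u \<noteq> c v"
proof -
  have fin: "finite V"
    using assms(1) by (simp add: simple_graph_def)
  have colors: "c ` V \<subseteq> {..<k}"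
    using assms(2) by (auto simp: proper_coloring_def)
  note mono = abc_weight_strict_mono[OF assms(3)]
  have bounds: "real (degree V E v) \<in> {1..}" "card V - real (t (c v)) \<in> {1..}"
    "real (degree V E v) \<le> card V - real (t (c v))" if "v \<in> V" for v
  proof -
    have "degree V E v \<le> card V - t (c v)"
      using degree_le_card_other_colors(1)[OF fin assms(2) that] by (simp add: t_def)
    moreover have "t (c v) \<le> card V"
      unfolding t_def using fin by (intro card_mono) auto
    ultimately show "real (degree V E v) \<le> card V - real (t (c v))"
      by (simp add: of_nat_diff flip: of_nat_le_iff)
    moreover have "1 \<le> real (degree V E v)"
      using deg that by simp
    ultimately show "real (degree V E v) \<in> {1..}" "card V - real (t (c v)) \<in> {1..}"
      by simp_all
  qed
  have classes: "(\<Sum>v\<in>V. abc_weight D (card V - real (t (c v))))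
      = (\<Sum>i<k. t i * abc_weight D (card V - real (t i)))"
    using sum_by_color_class[OF fin colors, of "\<lambda>i. abc_weight D (card V - real (t i))"]
    by (simp add: t_def)
  have le: "abc_weight D (degree V E v) \<le> abc_weight D (card V - real (t (c v)))" if "v \<in> V" for v
    using strict_mono_on_leD[OF mono bounds[OF that]] .
  show "(\<Sum>v\<in>V. abc_weight D (degree V E v)) \<le> (\<Sum>i<k. t i * abc_weight D (card V - real (t i)))"
    unfolding classes[symmetric] using le by (rule sum_mono)
  assume "(\<Sum>v\<in>V. abc_weight D (degree V E v)) = (\<Sum>i<k. t i * abc_weight D (card V - real (t i)))"
    and uv: "u \<in> V" "v \<in> V"
  then have "(\<Sum>v\<in>V. abc_weight D (degree V E v)) = (\<Sum>v\<in>V. abc_weight D (card V - real (t (c v))))"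
    using classes by simp
  then have "abc_weight D (degree V E v) = abc_weight D (card V - real (t (c v)))"
    by (rule sum_mono_inv[OF _ le uv(2) fin])
  then have "card V - real (t (c v)) = real (degree V E v)"
    using strict_mono_on_eqD[OF mono _ bounds(1,2)[OF uv(2)]] by blast
  then have "degree V E v = card V - card {u \<in> V. c u = c v}"
    unfolding t_def by linarith
  then show "{u, v} \<in> E \<longleftrightarrow> c u \<noteq> c v"
    using degree_le_card_other_colors(2)[OF fin assms(2) uv(2) _ uv(1)] by simp
qed

lemma card_color_class_less:
  assumes "simple_graph V E" "graph_connected V E" "proper_coloring V E k c" "2 \<le> card V"
  shows "card {v \<in> V. c v = i} < card V"
proof (cases "\<exists>v\<in>V. c v = i")
  case True
  then obtain v where v: "v \<in> V" "c v = i"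
    by blast
  have "finite V"
    using assms(1) by (simp add: simple_graph_def)
  then have "degree V E v \<le> card V - card {u \<in> V. c u = i}"
    using degree_le_card_other_colors(1)[OF _ assms(3) v(1)] v(2) by simp
  moreover have "1 \<le> degree V E v"
    using degree_ge_1_if_connected[OF assms(1,2,4) v(1)] .
  ultimately show ?thesis
    by linarith
next
  case False
  then have "{v \<in> V. c v = i} = {}"
    by blast
  then have "card {v \<in> V. c v = i} = 0"
    by (simp only: card.empty)
  then show ?thesis
    using assms(4) by simp
qed

lemma ABC_sq_le_coloring_bound:
  assumes "simple_graph V E" "graph_connected V E" "proper_coloring V E k c"
    and "card V = k * m" "2 \<le> k" "1 \<le> m"
  shows "(ABC V E)\<^sup>2 \<le> card V * (card V * (real (card V) - m - 1) / 2)"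
    and "(ABC V E)\<^sup>2 = card V * (card V * (real (card V) - m - 1) / 2) \<Longrightarrow>
      (\<forall>u\<in>V. \<forall>v\<in>V. {u, v} \<in> E \<longleftrightarrow> c u \<noteq> c v) \<and> (\<forall>i<k. card {v \<in> V. c v = i} = m)"
proof -
  define n where "n = real (card V)"
  define D where "D = n - m"
  define t where "t i = real (card {v \<in> V. c v = i})" for i
  have fin: "finite V"
    using assms(1) by (simp add: simple_graph_def)
  have "2 * m \<le> card V"
    using assms(4,5) by simp
  then have nm: "2 \<le> card V" "m \<le> D" "1 \<le> D"
    using assms(6) by (auto simp: D_def n_def)
  have deg: "\<forall>v\<in>V. 1 \<le> degree V E v"
    using degree_ge_1_if_connected[OF assms(1,2) nm(1)] by blast
  have colors: "c ` V \<subseteq> {..<k}"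
    using assms(3) by (auto simp: proper_coloring_def)
  have sum_t: "(\<Sum>i<k. t i) = card {..<k} * real m"
    using sum_by_color_class[OF fin colors, of "\<lambda>_. 1::real"] assms(4) by (simp add: t_def)
  have t_le: "t i \<le> D + m - 1" for i
  proof -
    have "card {v \<in> V. c v = i} + 1 \<le> card V"
      using card_color_class_less[OF assms(1-3) nm(1)] by (simp add: Suc_le_eq)
    then have "real (card {v \<in> V. c v = i} + 1) \<le> n"
      unfolding n_def by (rule of_nat_mono)
    then show ?thesis
      by (simp add: t_def D_def)
  qed
  have n_eq: "D + real m = n"
    by (simp add: D_def)
  note weights = ABC_sq_le_sum_abc_weight[OF assms(1) deg, of D, folded n_def]
    sum_abc_weight_degree_le_color_classes[OF assms(1,3) nm(3) deg, folded t_def n_def]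
    sum_abc_weight_complement_le[OF finite_lessThan nm(3,2) sum_t t_le, unfolded n_eq]
  have km: "real (card {..<k}) * real m = n"
    using assms(4) by (simp add: n_def)
  define S where "S = (\<Sum>v\<in>V. abc_weight D (degree V E v))"
  define T where "T = (\<Sum>i<k. t i * abc_weight D (n - t i))"
  have ABC_S: "(ABC V E)\<^sup>2 \<le> n * S"
    using weights(1) nm(3) by (simp add: S_def)
  have S_T: "S \<le> T"
    using weights(2) by (simp add: S_def T_def)
  have T_bound: "T \<le> n * (D - 1) / 2"
    using weights(4) km by (simp add: T_def)
  have n_pos: "0 < n"
    using nm(1) by (simp add: n_def)
  have bound: "card V * (card V * (real (card V) - m - 1) / 2) = n * (n * (D - 1) / 2)"
    by (simp add: n_def D_def)
  have "n * S \<le> n * T" "n * T \<le> n * (n * (D - 1) / 2)"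
    using S_T T_bound n_pos by simp_all
  then show "(ABC V E)\<^sup>2 \<le> card V * (card V * (real (card V) - m - 1) / 2)"
    unfolding bound using ABC_S by linarith
  assume "(ABC V E)\<^sup>2 = card V * (card V * (real (card V) - m - 1) / 2)"
  then have "n * (n * (D - 1) / 2) \<le> n * S"
    using ABC_S unfolding bound by simp
  then have "n * (D - 1) / 2 \<le> S"
    using n_pos by simp
  then have "S = T" "T = n * (D - 1) / 2"
    using S_T T_bound by linarith+
  moreover from this(2) have "T = real (card {..<k}) * real m * (D - 1) / 2"
    using km by simp
  ultimately show "(\<forall>u\<in>V. \<forall>v\<in>V. {u, v} \<in> E \<longleftrightarrow> c u \<noteq> c v) \<and> (\<forall>i<k. card {v \<in> V. c v = i} = m)"
    using weights(3) weights(5) by (simp add: S_def T_def t_def)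
qed

lemma turan_edges_iff:
  "{i, j} \<in> turan_edges n l \<longleftrightarrow> i < n \<and> j < n \<and> i mod l \<noteq> j mod l"
  unfolding turan_edges_def by (auto simp: doubleton_eq_iff)

lemma card_residue_class:
  fixes l r m :: nat
  assumes "r < l"
  shows "card {j \<in> {0..<l * m}. j mod l = r} = m"
proof -
  have "bij_betw (\<lambda>i. r + l * i) {0..<m} {j \<in> {0..<l * m}. j mod l = r}"
  proof (rule bij_betwI')
    fix i assume "i \<in> {0..<m}"
    then have "r + l * i < l * (i + 1)" "l * (i + 1) \<le> l * m"
      using assms by (simp, intro mult_le_mono2, simp)
    then show "r + l * i \<in> {j \<in> {0..<l * m}. j mod l = r}"
      using assms by simp
  next
    fix j assume j: "j \<in> {j \<in> {0..<l * m}. j mod l = r}"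
    then have "j = r + l * (j div l)" "j div l < m"
      by (auto simp: less_mult_imp_div_less mult.commute)
    then show "\<exists>i\<in>{0..<m}. j = r + l * i"
      by auto
  qed (use assms in simp)
  then show ?thesis
    by (simp add: bij_betw_same_card[symmetric])
qed

lemma degree_turan:
  assumes "0 < l" "i < l * m"
  shows "degree (turan_vertices (l * m)) (turan_edges (l * m) l) i = l * m - m"
proof -
  define R where "R = {j \<in> {0..<l * m}. j mod l = i mod l}"
  have "{j \<in> {0..<l * m}. {j, i} \<in> turan_edges (l * m) l} = {0..<l * m} - R"
    using assms(2) by (auto simp: turan_edges_iff R_def)
  moreover have "card ({0..<l * m} - R) = l * m - m"
    using assms(1) card_residue_class[of "i mod l" l m] by (subst card_Diff_subset) (auto simp: R_def)
  ultimately show ?thesis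
    unfolding degree_def turan_vertices_def by simp
qed

lemma degree_graph_iso:
  assumes "bij_betw f V W" "\<And>u v. u \<in> V \<Longrightarrow> v \<in> V \<Longrightarrow> {u, v} \<in> E \<longleftrightarrow> {f u, f v} \<in> F"
    and "v \<in> V"
  shows "degree W F (f v) = degree V E v"
proof -
  have inj: "inj_on f V" and img: "f ` V = W"
    using assms(1) by (simp_all add: bij_betw_def)
  have "{u \<in> V. {f u, f v} \<in> F} = {u \<in> V. {u, v} \<in> E}"
  proof (rule Collect_cong)
    fix u
    show "(u \<in> V \<and> {f u, f v} \<in> F) = (u \<in> V \<and> {u, v} \<in> E)"
      using assms(2)[of u v] assms(3) by blast
  qed
  moreover have "{w \<in> W. {w, f v} \<in> F} = f ` {u \<in> V. {f u, f v} \<in> F}"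
    unfolding img[symmetric] by blast
  ultimately have "{w \<in> W. {w, f v} \<in> F} = f ` {u \<in> V. {u, v} \<in> E}"
    by simp
  moreover have "inj_on f {u \<in> V. {u, v} \<in> E}"
    using inj by (rule inj_on_subset) blast
  ultimately show ?thesis
    unfolding degree_def by (simp add: card_image)
qed

lemma ABC_regular:
  assumes "simple_graph V E" "\<And>v. v \<in> V \<Longrightarrow> degree V E v = d" "1 \<le> d"
  shows "ABC V E = card V * sqrt ((real d - 1) / 2)"
proof -
  have "real (2 * card E) = (\<Sum>e\<in>E. \<Sum>v\<in>e. 1)"
    using assms(1) by (simp add: simple_graph_def)
  also have "\<dots> = card V * d"
    using handshake[OF assms(1), of "\<lambda>_. 1::real"] assms(2) by simp
  finally have edges: "2 * real (card E) = card V * d"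
    by simp
  have "ABC V E = (\<Sum>e\<in>E. sqrt ((2 * real d - 2) / (real d * real d)))"
    unfolding ABC_def
  proof (rule sum.cong)
    fix e assume "e \<in> E"
    then obtain a b where "a \<noteq> b" "a \<in> V" "b \<in> V" "e = {a, b}"
      using simple_graph_edgeE[OF assms(1)] by metis
    then show "sqrt (((\<Sum>v\<in>e. real (degree V E v)) - 2) / (\<Prod>v\<in>e. real (degree V E v)))
        = sqrt ((2 * real d - 2) / (real d * real d))"
      using assms(2) by simp
  qed simp
  also have "sqrt ((2 * real d - 2) / (real d * real d)) = 2 / d * sqrt ((real d - 1) / 2)"
  proof -
    have "(2 * real d - 2) / (real d * real d) = (2 / d)\<^sup>2 * ((real d - 1) / 2)"
      using assms(3) by (simp add: field_simps power2_eq_square)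
    moreover have "sqrt ((2 / real d)\<^sup>2) = 2 / d"
      by simp
    ultimately show ?thesis
      by (simp only: real_sqrt_mult)
  qed
  finally have "ABC V E = 2 * real (card E) / d * sqrt ((real d - 1) / 2)"
    by simp
  then show ?thesis
    using edges assms(3) by simp
qed

lemma graph_iso_turan_if_balanced:
  assumes "finite V" "\<And>v. v \<in> V \<Longrightarrow> c v < k"
    and adj: "\<And>u v. u \<in> V \<Longrightarrow> v \<in> V \<Longrightarrow> {u, v} \<in> E \<longleftrightarrow> c u \<noteq> c v"
    and classes: "\<And>i. i < k \<Longrightarrow> card {v \<in> V. c v = i} = m"
  shows "graph_iso V E (turan_vertices (k * m)) (turan_edges (k * m) k)"
proof -
  have "\<exists>h. bij_betw h {v \<in> V. c v = i} {0..<m}" if "i < k" for i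
    using ex_bij_betw_finite_nat[of "{v \<in> V. c v = i}"] assms(1) classes[OF that] by auto
  then obtain h where h: "\<And>i. i < k \<Longrightarrow> bij_betw (h i) {v \<in> V. c v = i} {0..<m}"
    by metis
  text \<open>Number the vertices of color class \<open>i\<close> as \<open>i, i + k, i + 2 k, \<dots>\<close>.\<close>
  define f where "f v = c v + k * h (c v) v" for v
  have h_lt: "h (c v) v < m" if "v \<in> V" for v
    using h[OF assms(2)[OF that]] that by (auto simp: bij_betw_def)
  have f_mod: "f v mod k = c v" if "v \<in> V" for v
    using assms(2)[OF that] by (simp add: f_def)
  have f_lt: "f v < k * m" if "v \<in> V" for v
  proof -
    have "f v < k * (h (c v) v + 1)"
      using assms(2)[OF that] by (simp add: f_def)
    also have "\<dots> \<le> k * m"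
      using h_lt[OF that] by (intro mult_le_mono2) simp
    finally show ?thesis .
  qed
  have "inj_on f V"
  proof (rule inj_onI)
    fix u v assume uv: "u \<in> V" "v \<in> V" "f u = f v"
    then have "c u = c v"
      using f_mod by metis
    moreover from this have "h (c u) u = h (c u) v"
      using uv assms(2)[OF uv(1)] by (simp add: f_def)
    ultimately show "u = v"
      using h[OF assms(2)[OF uv(1)]] uv(1,2) by (auto simp: bij_betw_def dest: inj_onD)
  qed
  moreover have "card V = k * m"
    using sum_by_color_class[OF assms(1), of c k "\<lambda>_. 1::nat"] assms(2) classes by auto
  then have "f ` V = {0..<k * m}"
    using f_lt card_image[OF \<open>inj_on f V\<close>] by (intro card_subset_eq) auto
  ultimately have "bij_betw f V (turan_vertices (k * m))"
    by (simp add: bij_betw_def turan_vertices_def)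
  moreover have "{u, v} \<in> E \<longleftrightarrow> {f u, f v} \<in> turan_edges (k * m) k" if "u \<in> V" "v \<in> V" for u v
    using adj that f_lt f_mod by (simp add: turan_edges_iff)
  ultimately show ?thesis
    unfolding graph_iso_def by blast
qed

lemma ABC_le_coloring_bound:
  assumes "simple_graph V E" "graph_connected V E" "proper_coloring V E k c"
    and "card V = k * m" "2 \<le> k" "1 \<le> m"
  shows "ABC V E \<le> card V * sqrt ((real (card V) - m - 1) / 2)"
    and "ABC V E = card V * sqrt ((real (card V) - m - 1) / 2) \<Longrightarrow>
      graph_iso V E (turan_vertices (k * m)) (turan_edges (k * m) k)"
proof -
  note sq = ABC_sq_le_coloring_bound[OF assms]
  have "2 * m \<le> card V"
    using assms(4,5) by simp
  then have "real (2 * m) \<le> real (card V)"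
    by (rule of_nat_mono)
  then have nonneg: "0 \<le> (real (card V) - m - 1) / 2"
    using assms(6) by simp
  then have "(sqrt ((real (card V) - m - 1) / 2))\<^sup>2 = (real (card V) - m - 1) / 2"
    by simp
  then have rhs_sq: "(card V * sqrt ((real (card V) - m - 1) / 2))\<^sup>2
      = card V * (card V * (real (card V) - m - 1) / 2)"
    by (simp only: power_mult_distrib) (simp add: power2_eq_square)
  show "ABC V E \<le> card V * sqrt ((real (card V) - m - 1) / 2)"
    using sq(1)[folded rhs_sq] by (rule power2_le_imp_le) (use nonneg in simp)
  assume "ABC V E = card V * sqrt ((real (card V) - m - 1) / 2)"
  then have "(\<forall>u\<in>V. \<forall>v\<in>V. {u, v} \<in> E \<longleftrightarrow> c u \<noteq> c v) \<and> (\<forall>i<k. card {v \<in> V. c v = i} = m)"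
    using sq(2) rhs_sq by simp
  moreover have "finite V" "\<And>v. v \<in> V \<Longrightarrow> c v < k"
    using assms(1,3) by (auto simp: simple_graph_def proper_coloring_def)
  ultimately show "graph_iso V E (turan_vertices (k * m)) (turan_edges (k * m) k)"
    using graph_iso_turan_if_balanced[of V c k E m] by simp
qed

lemma ABC_graph_iso_turan:
  assumes "simple_graph V E" "graph_iso V E (turan_vertices (k * m)) (turan_edges (k * m) k)"
    and "2 \<le> k" "1 \<le> m"
  shows "ABC V E = card V * sqrt ((real (card V) - m - 1) / 2)"
proof -
  obtain f where f: "bij_betw f V {0..<k * m}"
    and adj: "\<And>u v. u \<in> V \<Longrightarrow> v \<in> V \<Longrightarrow> {u, v} \<in> E \<longleftrightarrow> {f u, f v} \<in> turan_edges (k * m) k"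
    using assms(2) unfolding graph_iso_def turan_vertices_def by blast
  have card: "card V = k * m"
    using bij_betw_same_card[OF f] by simp
  have "degree V E v = k * m - m" if "v \<in> V" for v
  proof -
    have "f v < k * m"
      using f that by (auto simp: bij_betw_def)
    then show ?thesis
      using degree_graph_iso[OF f[folded turan_vertices_def] adj that] degree_turan[of k "f v" m] assms(3)
      by simp
  qed
  moreover have "1 \<le> k * m - m"
    using mult_le_mono1[OF assms(3), of m] assms(4) by linarith
  ultimately have "ABC V E = card V * sqrt ((real (k * m - m) - 1) / 2)"
    using ABC_regular[OF assms(1)] by blast
  moreover have "real (k * m - m) = real (card V) - m"
    using of_nat_diff[of m "k * m"] mult_le_mono1[of 1 k m] assms(3) card by simp
  ultimately show ?thesis
    by simp
qed

theorem corollary3: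
  fixes V :: "'a set" and E :: "'a set set" and n :: nat
  assumes "simple_graph V E"
    and "card V = n"
    and "graph_connected V E"
    and "chromatic_number V E \<ge> 2"
    and "chromatic_number V E dvd n"
  shows "ABC V E \<le> real n * sqrt ((real (chromatic_number V E) * (real n - 1) - real n)
                                     / (2 * real (chromatic_number V E)))
         \<and> (ABC V E = real n * sqrt ((real (chromatic_number V E) * (real n - 1) - real n)
                                     / (2 * real (chromatic_number V E)))
         \<longleftrightarrow> graph_iso V E (turan_vertices n) (turan_edges n (chromatic_number V E)))"
proof -
  define k where "k = chromatic_number V E"
  obtain c where c: "proper_coloring V E k c"
    using proper_coloring_chromatic_number[OF assms(1)] unfolding k_def .
  obtain m where n: "n = k * m"
    using assms(5) unfolding k_def by blast
  have k: "2 \<le> k"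
    using assms(4) by (simp add: k_def)
  moreover have "k \<le> n"
    using chromatic_number_le_card[OF assms(1)] assms(2) by (simp add: k_def)
  ultimately have m: "1 \<le> m"
    using n by (cases m) auto
  have rhs: "(real k * (real n - 1) - real n) / (2 * real k) = (real n - m - 1) / 2"
    using k n by (simp add: field_simps)
  have card: "card V = k * m"
    using assms(2) n by simp
  note bound = ABC_le_coloring_bound[OF assms(1,3) c card k m] ABC_graph_iso_turan[OF assms(1) _ k m]
  show ?thesis
    unfolding k_def[symmetric] rhs unfolding n using bound[unfolded card] by blast
qed

end
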